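(* Let $G_n(y)=\sum_{0\le k\le n}B(n,k)y^k$. Then $$\sum_{n\ge 0}G_n(y)\frac{x^n}{n!}=\frac{1}{\cos x-y\sin x}.$$ In particular $\sum_{k}B(n,k)$ equals the Springer number $S_n$, defined by $\sum_{n\ge0}S_n x^n/n!=1/(\cos x-\sin x)$.
   Context: A labeled ballot path is a lattice path from $(0,0)$ with steps $u=(1,1)$, $d=(1,-1)$ never going below the $x$-axis, each step carrying an integer label between $0$ and its height, where the height of a step is the smaller $y$-coordinate of its endpoints. $B(n,k)$ is the number of labeled ballot paths from $(0,0)$ ending at $(n,k)$. *)

theory Defs
  imports "HOL-Computational_Algebra.Formal_Power_Series"
begin

text \<open>A labeled ballot path is encoded as a list of steps; each step is a pair
(up, label) where up = True means u = (1,1) and up = False means d = (1,-1).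
lbp y ps e: starting at height y, the labeled path ps never goes below the
x-axis, every label lies between 0 and the height of its step (the smaller
y-coordinate of its endpoints), and the path ends at height e.\<close>

fun lbp :: "nat \<Rightarrow> (bool \<times> nat) list \<Rightarrow> nat \<Rightarrow> bool" where
  "lbp y [] e = (e = y)"
| "lbp y ((True, l) # ps) e = (l \<le> y \<and> lbp (y + 1) ps e)"
| "lbp y ((False, l) # ps) e = (0 < y \<and> l \<le> y - 1 \<and> lbp (y - 1) ps e)"

definition B :: "nat \<Rightarrow> nat \<Rightarrow> nat" where
  "B n k = card {ps. length ps = n \<and> lbp 0 ps k}"

definition G :: "nat \<Rightarrow> real \<Rightarrow> real" where
  "G n y = (\<Sum>k\<le>n. real (B n k) * y ^ k)"

definition springer :: "nat \<Rightarrow> real" where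
  "springer n = fact n * fps_nth (inverse (fps_cos (1::real) - fps_sin 1)) n"

end

theory Submission
  imports Defs
begin

(* Generalise the starting height: let paths n a k be the labeled
   ballot paths of length n from height a to height k.  Splitting off the first
   step gives a transfer recurrence: there are a+1 labels for an up step and a
   labels for a down step.  Hence the height polynomials
   hpoly n a y = \<Sum>k card (paths n a k) * y^k satisfy
   hpoly (n+1) a = (a+1) hpoly n (a+1) + a hpoly n (a-1),  hpoly 0 a = y^a,
   so their exponential generating functions H_a solve the infinite ODE system
   H_a' = (a+1) H_(a+1) + a H_(a-1),  H_a(0) = y^a.
   Such a system has at most one solution (coefficients are determined one
   degree at a time), and with D = cos x - y sin x, T = sin x + y cos x
   (so D' = -T, T' = D) the series T^a / D^(a+1) is a solution.  Taking a = 0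
   gives the generating function of G n y = hpoly n 0 y; putting y = 1 gives the
   Springer numbers. *)

unbundle fps_syntax

definition paths :: "nat \<Rightarrow> nat \<Rightarrow> nat \<Rightarrow> (bool \<times> nat) list set" where
  "paths n a k = {ps. length ps = n \<and> lbp a ps k}"

lemma paths_0: "paths 0 a k = (if k = a then {[]} else {})"
  by (auto simp: paths_def)

lemma paths_Suc:
  "paths (Suc n) a k =
     (\<lambda>(l, ps). (True, l) # ps) ` ({..a} \<times> paths n (Suc a) k) \<union>
     (\<lambda>(l, ps). (False, l) # ps) ` ({..<a} \<times> paths n (a - 1) k)"
proof (rule set_eqI)
  fix qs
  show "qs \<in> paths (Suc n) a k \<longleftrightarrow> qs \<in> (\<lambda>(l, ps). (True, l) # ps) ` ({..a} \<times> paths n (Suc a) k) \<union>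
          (\<lambda>(l, ps). (False, l) # ps) ` ({..<a} \<times> paths n (a - 1) k)"
  proof (cases qs)
    case Nil
    then show ?thesis by (auto simp: paths_def)
  next
    case (Cons s ps)
    obtain up l where "s = (up, l)" by force
    then show ?thesis
      by (cases up) (auto simp: paths_def Cons)
  qed
qed

lemma finite_paths: "finite (paths n a k)"
  by (induction n arbitrary: a) (simp_all add: paths_0 paths_Suc)

lemma card_paths_Suc:
  "card (paths (Suc n) a k) = (a + 1) * card (paths n (Suc a) k) + a * card (paths n (a - 1) k)"
proof -
  have inj_step: "inj_on (\<lambda>(l, ps). (up, l) # ps) X"
    for up :: bool and X :: "(nat \<times> (bool \<times> nat) list) set"
    by (auto simp: inj_on_def)
  have "card (paths (Suc n) a k)
      = card ((\<lambda>(l, ps). (True, l) # ps) ` ({..a} \<times> paths n (Suc a) k))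
      + card ((\<lambda>(l, ps). (False, l) # ps) ` ({..<a} \<times> paths n (a - 1) k))"
    unfolding paths_Suc by (rule card_Un_disjoint) (auto simp: finite_paths)
  also have "\<dots> = (a + 1) * card (paths n (Suc a) k) + a * card (paths n (a - 1) k)"
    by (simp add: card_image[OF inj_step] card_cartesian_product)
  finally show ?thesis .
qed

fun hpoly :: "nat \<Rightarrow> nat \<Rightarrow> 'a::comm_semiring_1 \<Rightarrow> 'a" where
  "hpoly 0 a y = y ^ a"
| "hpoly (Suc n) a y = of_nat (a + 1) * hpoly n (Suc a) y + of_nat a * hpoly n (a - 1) y"

text \<open>Every end height is at most n + a, so any summation range beyond it works.\<close>
lemma hpoly_eq_sum:
  fixes y :: "'a::comm_semiring_1"
  assumes "n + a \<le> m"
  shows "hpoly n a y = (\<Sum>k\<le>m. of_nat (card (paths n a k)) * y ^ k)"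
  using assms
proof (induction n arbitrary: a)
  case 0
  have "(\<Sum>k\<le>m. of_nat (card (paths 0 a k)) * y ^ k) = (\<Sum>k\<le>m. if k = a then y ^ k else 0)"
    by (rule sum.cong) (auto simp: paths_0)
  also have "\<dots> = y ^ a" using 0 by (simp add: sum.delta)
  finally show ?case by simp
next
  case (Suc n)
  have "(\<Sum>k\<le>m. of_nat (card (paths (Suc n) a k)) * y ^ k)
      = of_nat (a + 1) * (\<Sum>k\<le>m. of_nat (card (paths n (Suc a) k)) * y ^ k)
      + of_nat a * (\<Sum>k\<le>m. of_nat (card (paths n (a - 1) k)) * y ^ k)"
    by (simp add: card_paths_Suc sum_distrib_left sum.distrib algebra_simps)
  also have "\<dots> = hpoly (Suc n) a y"
    using Suc.IH[of "Suc a"] Suc.IH[of "a - 1"] Suc.prems by simp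
  finally show ?case by simp
qed

lemma G_eq_hpoly: "G n y = hpoly n 0 y"
  unfolding G_def B_def using hpoly_eq_sum[of n 0 n y] by (simp add: paths_def)

text \<open>A family of power series solving
  F_a' = p a * F_(a+1) + q a * F_(a-1) is determined by its constant terms:
  the coefficient of x^(n+1) in every F_a is fixed by the coefficients of x^n.\<close>
lemma tridiagonal_system_unique:
  fixes F H :: "nat \<Rightarrow> 'a::field_char_0 fps" and p q :: "nat \<Rightarrow> 'a"
  assumes init: "\<And>a. F a $ 0 = H a $ 0"
    and F_deriv: "\<And>a. fps_deriv (F a) = fps_const (p a) * F (Suc a) + fps_const (q a) * F (a - 1)"
    and H_deriv: "\<And>a. fps_deriv (H a) = fps_const (p a) * H (Suc a) + fps_const (q a) * H (a - 1)"
  shows "F a = H a"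
proof -
  have "\<forall>a. F a $ n = H a $ n" for n
  proof (induction n)
    case 0
    then show ?case using init by simp
  next
    case (Suc n)
    show ?case
    proof
      fix a
      have "fps_deriv (F a) $ n = fps_deriv (H a) $ n"
        unfolding F_deriv H_deriv using Suc by simp
      then show "F a $ Suc n = H a $ Suc n"
        by (simp del: of_nat_Suc)
    qed
  qed
  then show ?thesis by (simp add: fps_ext)
qed

text \<open>The exponential generating functions of the height polynomials solve the
  system with p a = a + 1, q a = a; this is the transfer recurrence read off
  coefficientwise.\<close>
definition hpoly_egf :: "'a::field_char_0 \<Rightarrow> nat \<Rightarrow> 'a fps" where
  "hpoly_egf y a = Abs_fps (\<lambda>n. hpoly n a y / fact n)"

lemma hpoly_egf_deriv:
  "fps_deriv (hpoly_egf y a) =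
     fps_const (of_nat (a + 1)) * hpoly_egf y (Suc a) + fps_const (of_nat a) * hpoly_egf y (a - 1)"
proof (rule fps_ext)
  fix n
  have "fps_deriv (hpoly_egf y a) $ n = hpoly (Suc n) a y / fact n"
    by (simp add: hpoly_egf_def fps_deriv_def field_simps del: of_nat_Suc)
  then show "fps_deriv (hpoly_egf y a) $ n =
      (fps_const (of_nat (a + 1)) * hpoly_egf y (Suc a) + fps_const (of_nat a) * hpoly_egf y (a - 1)) $ n"
    by (simp add: hpoly_egf_def add_divide_distrib)
qed

definition denom :: "'a::field_char_0 \<Rightarrow> 'a fps" where
  "denom y = fps_cos 1 - fps_const y * fps_sin 1"

definition numer :: "'a::field_char_0 \<Rightarrow> 'a fps" where
  "numer y = fps_sin 1 + fps_const y * fps_cos 1"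

lemma denom_nth_0: "denom y $ 0 = 1"
  by (simp add: denom_def)

lemma denom_deriv: "fps_deriv (denom y) = - numer y"
  by (simp add: denom_def numer_def fps_sin_deriv fps_cos_deriv fps_const_neg[symmetric]
      del: fps_const_neg)

lemma numer_deriv: "fps_deriv (numer y) = denom y"
  by (simp add: denom_def numer_def fps_sin_deriv fps_cos_deriv fps_const_neg[symmetric]
      del: fps_const_neg)

lemma denom_inverse: "denom y * inverse (denom y) = 1"
  using denom_nth_0[of y] by (simp add: inverse_mult_eq_1')

lemma inverse_denom_deriv: "fps_deriv (inverse (denom y)) = numer y * inverse (denom y) ^ 2"
  using denom_nth_0[of y] by (simp add: fps_inverse_deriv denom_deriv)

definition closed_form :: "'a::field_char_0 \<Rightarrow> nat \<Rightarrow> 'a fps" where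
  "closed_form y a = numer y ^ a * inverse (denom y) ^ (a + 1)"

lemma closed_form_deriv:
  "fps_deriv (closed_form y a) =
     fps_const (of_nat (a + 1)) * closed_form y (Suc a) + fps_const (of_nat a) * closed_form y (a - 1)"
proof (cases a)
  case 0
  then show ?thesis by (simp add: closed_form_def inverse_denom_deriv power2_eq_square)
next
  case (Suc b)
  let ?T = "numer y" and ?I = "inverse (denom y)" and ?D = "denom y"
  have T_pow: "fps_deriv (?T ^ a) = of_nat a * ?D * ?T ^ b"
    using fps_deriv_power'[of ?T a] by (simp add: numer_deriv Suc)
  have I_pow: "fps_deriv (?I ^ (a + 1)) = of_nat (a + 1) * (?T * ?I ^ 2) * ?I ^ a"
    using fps_deriv_power'[of ?I "a + 1"] by (simp add: inverse_denom_deriv)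
  have down: "of_nat a * ?D * ?T ^ b * ?I ^ (a + 1) = of_nat a * (?T ^ b * ?I ^ a) * (?D * ?I)"
    by (simp add: mult_ac)
  have up: "?T ^ a * (of_nat (a + 1) * (?T * ?I ^ 2) * ?I ^ a)
      = of_nat (a + 1) * (?T ^ (a + 1) * ?I ^ (a + 2))"
    by (simp add: mult_ac power2_eq_square)
  have "fps_deriv (closed_form y a)
      = of_nat a * ?D * ?T ^ b * ?I ^ (a + 1) + ?T ^ a * (of_nat (a + 1) * (?T * ?I ^ 2) * ?I ^ a)"
    unfolding closed_form_def fps_deriv_mult T_pow I_pow by simp
  also have "\<dots> = of_nat a * (?T ^ b * ?I ^ a) + of_nat (a + 1) * (?T ^ (a + 1) * ?I ^ (a + 2))"
    unfolding down up denom_inverse by simp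
  also have "\<dots> = fps_const (of_nat (a + 1)) * closed_form y (Suc a)
                 + fps_const (of_nat a) * closed_form y (a - 1)"
    by (simp add: closed_form_def Suc fps_of_nat[symmetric] del: of_nat_Suc)
  finally show ?thesis .
qed

text \<open>Both families start with y^a, so they coincide.\<close>
lemma hpoly_egf_closed_form: "hpoly_egf y a = closed_form y a"
proof (rule tridiagonal_system_unique)
  fix a
  have "numer y $ 0 = y" by (simp add: numer_def)
  then show "hpoly_egf y a $ 0 = closed_form y a $ 0"
    using denom_nth_0[of y] by (simp add: hpoly_egf_def closed_form_def fps_nth_power_0)
qed (rule hpoly_egf_deriv, rule closed_form_deriv)

theorem theorem4p4:
  shows "(\<forall>y::real. Abs_fps (\<lambda>n. G n y / fact n)
            = inverse (fps_cos 1 - fps_const y * fps_sin 1))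
         \<and> (\<forall>n. real (\<Sum>k\<le>n. B n k) = springer n)"
proof -
  have egf: "Abs_fps (\<lambda>n. G n y / fact n) = inverse (fps_cos 1 - fps_const y * fps_sin 1)"
    for y :: real
    using hpoly_egf_closed_form[of y 0]
    by (simp add: hpoly_egf_def closed_form_def denom_def G_eq_hpoly)
  moreover have "real (\<Sum>k\<le>n. B n k) = springer n" for n
  proof -
    have "real (\<Sum>k\<le>n. B n k) = G n 1" by (simp add: G_def)
    also have "\<dots> = fact n * (Abs_fps (\<lambda>n. G n 1 / fact n) $ n)" by simp
    also have "\<dots> = springer n" unfolding egf springer_def by simp
    finally show ?thesis .
  qed
  ultimately show ?thesis by blast
qed

end
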